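(* Let $X \sim \pi_0$ on $\mathcal{X}$, let $X \to W \to Z = M(W)$ be a Markov chain where $M$ is $\varepsilon$-locally differentially private in the density sense (there is a $\sigma$-finite $\mu$ with $M(w)$ having density $q(\cdot\mid w)$ w.r.t. $\mu$ and $q(z\mid w)\le e^{\varepsilon} q(z\mid w')$ for all $z,w,w'$). Let $f : \mathcal{X} \to \mathbb{R}^k$ be measurable, $L_{\rm rec} : \mathbb{R}^k \times \mathbb{R}^k \to \mathbb{R}_+$ a measurable loss, $\alpha \ge 0$ and $p(\alpha) \in [0,1]$. Suppose that \[ \mathbb{P}_{\pi_0}\big(L_{\rm rec}(f(X), v_0) \le \alpha\big) \le p(\alpha) \quad \text{for all fixed } v_0 \in \mathbb{R}^k. \] Then $M$ is $(\alpha, e^{\varepsilon} p(\alpha), f)$-protected against reconstruction for $L_{\rm rec}$; that is, for every measurable estimator $\widehat v : \mathcal{Z} \to \mathbb{R}^k$ and (almost) every $z$, \[ \mathbb{P}\big(L_{\rm rec}(f(X), \widehat v(z)) \le \alpha \,\big|\, Z = z\big) \le e^{\varepsilon} p(\alpha). \]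
   Context: $\varepsilon$-local differential privacy of $M$: $\mathbb{P}(M(w)\in S)\le e^{\varepsilon}\mathbb{P}(M(w')\in S)$ for all inputs $w,w'$ and measurable $S$. A mechanism $M$ is $(\alpha,p,f)$-protected against reconstruction for loss $L_{\rm rec}$ if for every estimator $\widehat v:\mathcal Z\to\mathbb R^k$, $\sup_z \mathbb P(L_{\rm rec}(f(X),\widehat v(z))\le\alpha \mid M(W)=z)\le p$. *)

theory Defs
  imports "HOL-Probability.Probability"
begin

text \<open>Setting: X ~ pi0 (probability measure on the X-space), W | X = x ~ K x
  (a Markov kernel into Ws), Z = M(W) with M(w) having density q w w.r.t. mu.\<close>

text \<open>Joint density of (X,Z) w.r.t. pi0 (x) mu: g(x,z) = integral of q(z|w) against K x.\<close>
definition lik :: "('x \<Rightarrow> 'w measure) \<Rightarrow> ('w \<Rightarrow> 'z \<Rightarrow> ennreal) \<Rightarrow> 'x \<Rightarrow> 'z \<Rightarrow> ennreal" where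
  "lik K q x z = (\<integral>\<^sup>+ w. q w z \<partial>K x)"

definition marg_dens :: "'x measure \<Rightarrow> ('x \<Rightarrow> 'w measure) \<Rightarrow> ('w \<Rightarrow> 'z \<Rightarrow> ennreal) \<Rightarrow> 'z \<Rightarrow> ennreal" where
  "marg_dens pi0 K q z = (\<integral>\<^sup>+ x. lik K q x z \<partial>pi0)"

text \<open>Conditional probability P(X in A | Z = z) by Bayes' formula
  (meaningful where the marginal density is positive and finite).\<close>
definition cond_prob :: "'x measure \<Rightarrow> ('x \<Rightarrow> 'w measure) \<Rightarrow> ('w \<Rightarrow> 'z \<Rightarrow> ennreal) \<Rightarrow> 'x set \<Rightarrow> 'z \<Rightarrow> real" where
  "cond_prob pi0 K q A z =
     enn2real (set_nn_integral pi0 A (\<lambda>x. lik K q x z)) / enn2real (marg_dens pi0 K q z)"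

definition ldp_density :: "real \<Rightarrow> 'w measure \<Rightarrow> 'z measure \<Rightarrow> ('w \<Rightarrow> 'z \<Rightarrow> ennreal) \<Rightarrow> bool" where
  "ldp_density \<epsilon> Ws mu q \<longleftrightarrow>
     sigma_finite_measure mu \<and>
     (\<lambda>(w, z). q w z) \<in> borel_measurable (Ws \<Otimes>\<^sub>M mu) \<and>
     (\<forall>w\<in>space Ws. prob_space (density mu (q w))) \<and>
     (\<forall>z\<in>space mu. \<forall>w\<in>space Ws. \<forall>w'\<in>space Ws. q w z \<le> ennreal (exp \<epsilon>) * q w' z)"

text \<open>(alpha,p,f)-protection against reconstruction for the loss L: for every measurable
  estimator vhat and every z (with positive finite marginal density, i.e. almost every z),
  P(L(f X, vhat z) <= alpha | Z = z) <= p.\<close>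
definition protected_rec ::
  "'x measure \<Rightarrow> ('x \<Rightarrow> 'w measure) \<Rightarrow> 'z measure \<Rightarrow> ('w \<Rightarrow> 'z \<Rightarrow> ennreal)
   \<Rightarrow> ('x \<Rightarrow> real^'k) \<Rightarrow> (real^'k \<Rightarrow> real^'k \<Rightarrow> real) \<Rightarrow> real \<Rightarrow> real \<Rightarrow> bool" where
  "protected_rec pi0 K mu q f L \<alpha> p \<longleftrightarrow>
     (\<forall>vhat \<in> borel_measurable mu. \<forall>z\<in>space mu.
        0 < marg_dens pi0 K q z \<and> marg_dens pi0 K q z < \<infinity> \<longrightarrow>
        cond_prob pi0 K q {x\<in>space pi0. L (f x) (vhat z) \<le> \<alpha>} z \<le> p)"

end

theory Submission
  imports Defs
begin

text \<open>For fixed z the likelihood x \<mapsto> lik K q x z is an average of q(z|w), and by local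
  differential privacy any two values of q(z|\<cdot>) are within a factor e^\<epsilon>; hence so are any
  two values of the likelihood. Bayes' formula then bounds the posterior probability of an event
  by e^\<epsilon> times its prior probability, and the event that the loss of an estimate v(z)
  is at most \<alpha> has prior probability at most p.\<close>

lemma kernel_sets_space:
  assumes "K \<in> measurable M (prob_algebra N)" "x \<in> space M"
  shows "prob_space (K x)" "sets (K x) = sets N" "space (K x) = space N"
proof -
  show "prob_space (K x)" "sets (K x) = sets N"
    using measurable_space[OF assms] by (simp_all add: space_prob_algebra)
  then show "space (K x) = space N" by (metis sets_eq_imp_space_eq)
qed

lemma ldp_density_measurable_slice:
  assumes "ldp_density \<epsilon> Ws mu q" "z \<in> space mu"
  shows "(\<lambda>w. q w z) \<in> borel_measurable Ws"
proof -
  have q: "(\<lambda>(w, z). q w z) \<in> borel_measurable (Ws \<Otimes>\<^sub>M mu)"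
    using assms(1) by (simp add: ldp_density_def)
  have "(\<lambda>w. (w, z)) \<in> Ws \<rightarrow>\<^sub>M Ws \<Otimes>\<^sub>M mu" using assms(2) by measurable
  from measurable_comp[OF this q] show ?thesis by (simp add: o_def)
qed

lemma lik_measurable:
  assumes "K \<in> measurable M (prob_algebra Ws)" "ldp_density \<epsilon> Ws mu q" "z \<in> space mu"
  shows "(\<lambda>x. lik K q x z) \<in> borel_measurable M"
proof -
  have "(\<lambda>N. integral\<^sup>N N (\<lambda>w. q w z)) \<in> borel_measurable (subprob_algebra Ws)"
    using ldp_density_measurable_slice[OF assms(2,3)] by (rule nn_integral_measurable_subprob_algebra)
  from measurable_comp[OF measurable_prob_algebraD[OF assms(1)] this]
  show ?thesis by (simp add: lik_def o_def)
qed

lemma lik_le_exp_mult_density: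
  assumes "K \<in> measurable M (prob_algebra Ws)" "ldp_density \<epsilon> Ws mu q"
    and "z \<in> space mu" "x \<in> space M" "w' \<in> space Ws"
  shows "lik K q x z \<le> ennreal (exp \<epsilon>) * q w' z"
proof -
  note K = kernel_sets_space[OF assms(1,4)]
  interpret prob_space "K x" by (fact K(1))
  have ldp: "q w z \<le> ennreal (exp \<epsilon>) * q w' z" if "w \<in> space (K x)" for w
    using assms(2,3,5) that K(3) unfolding ldp_density_def by blast
  have "lik K q x z \<le> (\<integral>\<^sup>+ w. ennreal (exp \<epsilon>) * q w' z \<partial>K x)"
    unfolding lik_def using ldp by (rule nn_integral_mono)
  also have "\<dots> = ennreal (exp \<epsilon>) * q w' z" by (simp add: emeasure_space_1)
  finally show ?thesis .
qed

lemma lik_le_exp_mult_lik: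
  assumes "K \<in> measurable M (prob_algebra Ws)" "ldp_density \<epsilon> Ws mu q"
    and "z \<in> space mu" "x \<in> space M" "x' \<in> space M"
  shows "lik K q x z \<le> ennreal (exp \<epsilon>) * lik K q x' z"
proof -
  note K' = kernel_sets_space[OF assms(1,5)]
  interpret prob_space "K x'" by (fact K'(1))
  have q_meas: "(\<lambda>w. q w z) \<in> borel_measurable (K x')"
    unfolding measurable_cong_sets[OF K'(2) refl]
    using assms(2,3) by (rule ldp_density_measurable_slice)
  have "lik K q x z = (\<integral>\<^sup>+ w. lik K q x z \<partial>K x')" by (simp add: emeasure_space_1)
  also have "\<dots> \<le> (\<integral>\<^sup>+ w. ennreal (exp \<epsilon>) * q w z \<partial>K x')"
    using lik_le_exp_mult_density[OF assms(1-4)] K'(3) by (intro nn_integral_mono) simp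
  also have "\<dots> = ennreal (exp \<epsilon>) * lik K q x' z"
    unfolding lik_def using q_meas by (rule nn_integral_cmult)
  finally show ?thesis .
qed

lemma (in prob_space) set_nn_integral_le_ratio_emeasure_nn_integral:
  assumes "g \<in> borel_measurable M" "A \<in> sets M"
    and ratio: "\<And>x x'. x \<in> space M \<Longrightarrow> x' \<in> space M \<Longrightarrow> g x \<le> c * g x'"
  shows "set_nn_integral M A g \<le> c * emeasure M A * (\<integral>\<^sup>+ x. g x \<partial>M)"
proof -
  define S where "S = set_nn_integral M A g"
  have S_le: "S \<le> c * emeasure M A * g x'" if "x' \<in> space M" for x'
  proof -
    have "S \<le> (\<integral>\<^sup>+ x. (c * g x') * indicator A x \<partial>M)"
      unfolding S_def using ratio that
      by (intro nn_integral_mono) (auto simp: indicator_def)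
    also have "\<dots> = (c * g x') * emeasure M A"
      by (rule nn_integral_cmult_indicator[OF assms(2)])
    finally show ?thesis by (simp add: ac_simps)
  qed
  have "S = (\<integral>\<^sup>+ x. S \<partial>M)" by (simp add: emeasure_space_1)
  also have "\<dots> \<le> (\<integral>\<^sup>+ x. c * emeasure M A * g x \<partial>M)"
    using S_le by (intro nn_integral_mono) auto
  also have "\<dots> = c * emeasure M A * (\<integral>\<^sup>+ x. g x \<partial>M)"
    using assms(1) by (simp add: nn_integral_cmult)
  finally show ?thesis unfolding S_def .
qed

lemma cond_prob_le_exp_mult_measure:
  assumes "prob_space pi0" "K \<in> measurable pi0 (prob_algebra Ws)" "ldp_density \<epsilon> Ws mu q"
    and "A \<in> sets pi0" "z \<in> space mu"
    and marg_pos: "0 < marg_dens pi0 K q z" and marg_fin: "marg_dens pi0 K q z < \<infinity>"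
  shows "cond_prob pi0 K q A z \<le> exp \<epsilon> * measure pi0 A"
proof -
  interpret prob_space pi0 by fact
  define m where "m = marg_dens pi0 K q z"
  have "set_nn_integral pi0 A (\<lambda>x. lik K q x z) \<le> ennreal (exp \<epsilon>) * emeasure pi0 A * m"
    unfolding m_def marg_dens_def
    using lik_measurable[OF assms(2,3,5)] assms(4) lik_le_exp_mult_lik[OF assms(2,3,5)]
    by (rule set_nn_integral_le_ratio_emeasure_nn_integral)
  also have "\<dots> = ennreal (exp \<epsilon> * measure pi0 A * enn2real m)"
    using marg_fin by (simp add: m_def emeasure_eq_measure ennreal_mult')
  finally have "enn2real (set_nn_integral pi0 A (\<lambda>x. lik K q x z))
      \<le> exp \<epsilon> * measure pi0 A * enn2real m"
    by (simp add: enn2real_leI)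
  moreover have "0 < enn2real m"
    using marg_pos marg_fin by (simp add: m_def enn2real_positive_iff)
  ultimately show ?thesis by (simp add: cond_prob_def m_def divide_le_eq)
qed

lemma loss_sublevel_set_sets:
  fixes f :: "'a \<Rightarrow> 'b::second_countable_topology" and v :: "'c::second_countable_topology"
    and L :: "'b \<Rightarrow> 'c \<Rightarrow> real"
  assumes "f \<in> borel_measurable M" "(\<lambda>(u, v). L u v) \<in> borel_measurable borel"
  shows "{x\<in>space M. L (f x) v \<le> \<alpha>} \<in> sets M"
proof -
  have "(\<lambda>x. (f x, v)) \<in> M \<rightarrow>\<^sub>M borel \<Otimes>\<^sub>M borel"
    using assms(1) by measurable
  then have "(\<lambda>x. (f x, v)) \<in> M \<rightarrow>\<^sub>M borel" by (simp add: borel_prod)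
  from measurable_comp[OF this assms(2)]
  have "(\<lambda>x. L (f x) v) \<in> borel_measurable M" by (simp add: o_def)
  then show ?thesis by measurable
qed

theorem lemma2p2:
  fixes pi0 :: "'x measure" and Ws :: "'w measure" and mu :: "'z measure"
    and K :: "'x \<Rightarrow> 'w measure" and q :: "'w \<Rightarrow> 'z \<Rightarrow> ennreal"
    and f :: "'x \<Rightarrow> real^'k" and L :: "real^'k \<Rightarrow> real^'k \<Rightarrow> real"
    and \<epsilon> \<alpha> p :: real
  assumes "prob_space pi0"
    and "K \<in> measurable pi0 (prob_algebra Ws)"
    and "ldp_density \<epsilon> Ws mu q"
    and "f \<in> borel_measurable pi0"
    and "(\<lambda>(u, v). L u v) \<in> borel_measurable borel"
    and "\<forall>u v. 0 \<le> L u v"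
    and "0 \<le> \<alpha>" and "0 \<le> p" and "p \<le> 1"
    and "\<forall>v0. measure pi0 {x\<in>space pi0. L (f x) v0 \<le> \<alpha>} \<le> p"
  shows "protected_rec pi0 K mu q f L \<alpha> (exp \<epsilon> * p)"
  unfolding protected_rec_def
proof (intro ballI impI)
  fix vhat z
  assume z: "z \<in> space mu" and marg: "0 < marg_dens pi0 K q z \<and> marg_dens pi0 K q z < \<infinity>"
  have "{x\<in>space pi0. L (f x) (vhat z) \<le> \<alpha>} \<in> sets pi0"
    using assms(4,5) by (rule loss_sublevel_set_sets)
  with assms(1-3) z marg
  have "cond_prob pi0 K q {x\<in>space pi0. L (f x) (vhat z) \<le> \<alpha>} z
      \<le> exp \<epsilon> * measure pi0 {x\<in>space pi0. L (f x) (vhat z) \<le> \<alpha>}"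
    by (intro cond_prob_le_exp_mult_measure) simp_all
  also have "\<dots> \<le> exp \<epsilon> * p"
    using assms(10) by (intro mult_left_mono) auto
  finally show "cond_prob pi0 K q {x\<in>space pi0. L (f x) (vhat z) \<le> \<alpha>} z \<le> exp \<epsilon> * p" .
qed

end
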